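(* Every factor-critical edge-stable equimatchable graph is 2-connected.
   Context: All graphs are finite and simple. A graph is equimatchable if all its maximal matchings have the same cardinality; an equimatchable graph $G$ is edge-stable if $G\setminus e$ (delete edge $e$, keep vertices) is equimatchable for every $e\in E(G)$. A graph $G$ is factor-critical if $G-v$ has a perfect matching for every $v\in V(G)$. *)

theory Defs
  imports Main
begin

definition simple_graph :: "'a set \<Rightarrow> 'a set set \<Rightarrow> bool" where
  "simple_graph V E \<longleftrightarrow> finite V \<and>
     (\<forall>e\<in>E. \<exists>u v. e = {u, v} \<and> u \<noteq> v \<and> u \<in> V \<and> v \<in> V)"

definition matching :: "'a set set \<Rightarrow> 'a set set \<Rightarrow> bool" where
  "matching E M \<longleftrightarrow> M \<subseteq> E \<and> (\<forall>e1\<in>M. \<forall>e2\<in>M. e1 \<noteq> e2 \<longrightarrow> e1 \<inter> e2 = {})"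

definition maximal_matching :: "'a set set \<Rightarrow> 'a set set \<Rightarrow> bool" where
  "maximal_matching E M \<longleftrightarrow> matching E M \<and>
     (\<forall>M'. matching E M' \<and> M \<subseteq> M' \<longrightarrow> M' = M)"

definition equimatchable :: "'a set \<Rightarrow> 'a set set \<Rightarrow> bool" where
  "equimatchable V E \<longleftrightarrow>
     (\<forall>M1 M2. maximal_matching E M1 \<and> maximal_matching E M2 \<longrightarrow> card M1 = card M2)"

definition edge_stable :: "'a set \<Rightarrow> 'a set set \<Rightarrow> bool" where
  "edge_stable V E \<longleftrightarrow> equimatchable V E \<and> (\<forall>e\<in>E. equimatchable V (E - {e}))"

definition induced_edges :: "'a set set \<Rightarrow> 'a set \<Rightarrow> 'a set set" where
  "induced_edges E W = {e\<in>E. e \<subseteq> W}"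

definition perfect_matching :: "'a set \<Rightarrow> 'a set set \<Rightarrow> 'a set set \<Rightarrow> bool" where
  "perfect_matching V E M \<longleftrightarrow> matching E M \<and> \<Union>M = V"

definition factor_critical :: "'a set \<Rightarrow> 'a set set \<Rightarrow> bool" where
  "factor_critical V E \<longleftrightarrow>
     (\<forall>v\<in>V. \<exists>M. perfect_matching (V - {v}) (induced_edges E (V - {v})) M)"

definition adj :: "'a set set \<Rightarrow> 'a \<Rightarrow> 'a \<Rightarrow> bool" where
  "adj E u v \<longleftrightarrow> {u, v} \<in> E"

definition connected :: "'a set \<Rightarrow> 'a set set \<Rightarrow> bool" where
  "connected V E \<longleftrightarrow> V \<noteq> {} \<and> (\<forall>u\<in>V. \<forall>v\<in>V. (adj E)\<^sup>*\<^sup>* u v)"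

definition two_connected :: "'a set \<Rightarrow> 'a set set \<Rightarrow> bool" where
  "two_connected V E \<longleftrightarrow> card V \<ge> 3 \<and> connected V E \<and>
     (\<forall>x\<in>V. connected (V - {x}) (induced_edges E (V - {x})))"

end

theory Submission imports Defs begin

text \<open>Suppose deleting a vertex x leaves two sides A and B with no edge between them. A perfect
  matching of G - x pairs vertices inside each side, so both sides are even. Hence in a perfect
  matching of G - a with a \<in> A the partner of x lies in A as well (otherwise A - a would be
  matched inside A), and likewise the partner w of x in a perfect matching of G - b with b \<in> B lies
  in B. Gluing the edges of the first matching inside A + x to those of the second inside B - w
  gives a matching missing only a, b and w. As a has no neighbour among b and w, it is maximal in
  G - bw, yet one edge smaller than the perfect matching of G - b, contradicting edge-stability.
  That G itself is connected and has at least three vertices follows from factor-criticality.\<close>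

lemma simple_graph_edgeE:
  assumes "simple_graph V E" "e \<in> E"
  obtains u v where "e = {u, v}" "u \<noteq> v" "u \<in> V" "v \<in> V"
  using assms unfolding simple_graph_def by blast

lemma simple_graph_finite: "simple_graph V E \<Longrightarrow> finite V"
  unfolding simple_graph_def by blast

lemma simple_graph_edge_subset: "simple_graph V E \<Longrightarrow> e \<in> E \<Longrightarrow> e \<subseteq> V"
  by (auto elim: simple_graph_edgeE)

lemma simple_graph_finite_edges:
  assumes "simple_graph V E"
  shows "finite E"
proof -
  have "E \<subseteq> Pow V" using simple_graph_edge_subset[OF assms] by blast
  then show ?thesis using simple_graph_finite[OF assms] by (meson finite_Pow_iff finite_subset)
qed

lemma simple_graph_Diff: "simple_graph V E \<Longrightarrow> simple_graph V (E - F)"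
  unfolding simple_graph_def by blast

lemma matching_subset: "matching E M \<Longrightarrow> M' \<subseteq> M \<Longrightarrow> matching E M'"
  unfolding matching_def by blast

lemma matching_Diff: "matching E M \<Longrightarrow> M \<inter> F = {} \<Longrightarrow> matching (E - F) M"
  unfolding matching_def by blast

lemma matching_Un:
  assumes "matching E M1" "matching E M2" "\<Union>M1 \<inter> \<Union>M2 = {}"
  shows "matching E (M1 \<union> M2)"
proof -
  have "e1 \<inter> e2 = {}" if "e1 \<in> M1" "e2 \<in> M2" for e1 e2
    using that assms(3) by blast
  then show ?thesis using assms(1,2) unfolding matching_def by (metis Int_commute Un_iff Un_subset_iff)
qed

lemma matching_edge_unique:
  "matching E M \<Longrightarrow> e \<in> M \<Longrightarrow> f \<in> M \<Longrightarrow> v \<in> e \<Longrightarrow> v \<in> f \<Longrightarrow> e = f"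
  unfolding matching_def by blast

lemma card_Union_matching:
  assumes sg: "simple_graph V E" and M: "matching E M"
  shows "card (\<Union>M) = 2 * card M"
proof -
  have ME: "M \<subseteq> E" using M unfolding matching_def by blast
  have "pairwise disjnt M" using M unfolding matching_def pairwise_def disjnt_def by blast
  moreover have "finite e" if "e \<in> M" for e
    using sg ME that by (auto elim: simple_graph_edgeE)
  ultimately have "card (\<Union>M) = (\<Sum>e\<in>M. card e)" by (rule card_Union_disjoint)
  also have "\<dots> = (\<Sum>e\<in>M. 2)"
    using sg ME by (intro sum.cong) (auto elim!: simple_graph_edgeE)
  finally show ?thesis by simp
qed

lemma matching_partner:
  assumes "simple_graph V E" "matching E M" "v \<in> \<Union>M"
  shows "\<exists>w. w \<noteq> v \<and> {v, w} \<in> M"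
proof -
  obtain e where e: "e \<in> M" "v \<in> e" using assms(3) by blast
  then have "e \<in> E" using assms(2) unfolding matching_def by blast
  then obtain p q where "e = {p, q}" "p \<noteq> q" using assms(1) by (auto elim: simple_graph_edgeE)
  then have "v = p \<and> e = {v, q} \<and> q \<noteq> v \<or> v = q \<and> e = {v, p} \<and> p \<noteq> v"
    using e by auto
  then show ?thesis using e(1) by blast
qed

lemma Union_closed_part:
  "\<forall>e\<in>M. e \<inter> S \<noteq> {} \<longrightarrow> e \<subseteq> S \<Longrightarrow> \<Union>{e\<in>M. e \<subseteq> S} = S \<inter> \<Union>M"
  by blast

lemma even_card_closed_part:
  assumes "simple_graph V E" "matching E M" "\<forall>e\<in>M. e \<inter> S \<noteq> {} \<longrightarrow> e \<subseteq> S"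
  shows "even (card (S \<inter> \<Union>M))"
proof -
  have "matching E {e\<in>M. e \<subseteq> S}" using assms(2) by (rule matching_subset) blast
  then have "card (\<Union>{e\<in>M. e \<subseteq> S}) = 2 * card {e\<in>M. e \<subseteq> S}"
    using assms(1) by (rule card_Union_matching[rotated])
  then show ?thesis by (simp add: Union_closed_part[OF assms(3)])
qed

lemma maximal_matching_if_edges_meet_Union:
  assumes M: "matching E M" and meet: "\<And>e. e \<in> E \<Longrightarrow> e \<inter> \<Union>M \<noteq> {}"
  shows "maximal_matching E M"
  unfolding maximal_matching_def
proof (intro conjI allI impI M)
  fix M' assume M': "matching E M' \<and> M \<subseteq> M'"
  show "M' = M"
  proof (rule ccontr)
    assume "M' \<noteq> M"
    then obtain e where e: "e \<in> M'" "e \<notin> M" using M' by blast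
    then have "e \<in> E" using M' unfolding matching_def by auto
    then obtain f where f: "f \<in> M" "e \<inter> f \<noteq> {}" using meet by blast
    then have "f \<in> M'" "f \<noteq> e" using M' e by auto
    then show False using M' e(1) f(2) unfolding matching_def by blast
  qed
qed

lemma maximal_matching_if_near_perfect:
  assumes sg: "simple_graph V E" and M: "matching E M" and card_V: "card V \<le> 2 * card M + 1"
  shows "maximal_matching E M"
  unfolding maximal_matching_def
proof (intro conjI allI impI M)
  fix M' assume "matching E M' \<and> M \<subseteq> M'"
  then have M': "matching E M'" "M \<subseteq> M'" by auto
  have "M' \<subseteq> E" using M'(1) unfolding matching_def by auto
  then have "finite M'" using simple_graph_finite_edges[OF sg] by (rule finite_subset)
  have "\<Union>M' \<subseteq> V" using simple_graph_edge_subset[OF sg] \<open>M' \<subseteq> E\<close> by blast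
  then have "card (\<Union>M') \<le> card V" by (rule card_mono[OF simple_graph_finite[OF sg]])
  then have "card M' \<le> card M" using card_Union_matching[OF sg M'(1)] card_V by linarith
  then show "M' = M" using card_seteq[OF \<open>finite M'\<close> M'(2)] by simp
qed

lemma edge_stable_equimatchable_Diff:
  assumes "edge_stable V E"
  shows "equimatchable V (E - {e})"
  using assms unfolding edge_stable_def by (cases "e \<in> E") auto

lemma factor_critical_matching:
  assumes "factor_critical V E" "v \<in> V"
  obtains M where "matching E M" "\<Union>M = V - {v}"
proof -
  obtain M where M: "perfect_matching (V - {v}) (induced_edges E (V - {v})) M"
    using assms unfolding factor_critical_def by blast
  then have "matching E M" unfolding perfect_matching_def matching_def induced_edges_def by blast
  moreover have "\<Union>M = V - {v}" using M unfolding perfect_matching_def by blast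
  ultimately show ?thesis using that by blast
qed

lemma factor_critical_card_odd:
  assumes sg: "simple_graph V E" and fc: "factor_critical V E" and x: "x \<in> V"
  shows "odd (card V)"
proof -
  obtain M where M: "matching E M" "\<Union>M = V - {x}" using factor_critical_matching[OF fc x] .
  have "card V = card (V - {x}) + 1"
    using simple_graph_finite[OF sg] x by (metis card_Suc_Diff1 Suc_eq_plus1)
  then show ?thesis using card_Union_matching[OF sg M(1)] M(2) by simp
qed

lemma factor_critical_neighbour:
  assumes sg: "simple_graph V E" and fc: "factor_critical V E"
    and x: "x \<in> V" and a: "a \<in> V" "a \<noteq> x"
  obtains z where "z \<in> V" "z \<noteq> x" "{x, z} \<in> E"
proof -
  obtain M where M: "matching E M" "\<Union>M = V - {a}" using factor_critical_matching[OF fc a(1)] .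
  then obtain z where z: "z \<noteq> x" "{x, z} \<in> M" using matching_partner[OF sg M(1)] x a by blast
  then have "z \<in> V" using M(2) by blast
  moreover have "{x, z} \<in> E" using z M(1) unfolding matching_def by blast
  ultimately show ?thesis using that z(1) by blast
qed

definition cut_vertex_split :: "'a set \<Rightarrow> 'a set set \<Rightarrow> 'a \<Rightarrow> 'a set \<Rightarrow> 'a set \<Rightarrow> bool" where
  "cut_vertex_split V E x A B \<longleftrightarrow> x \<in> V \<and> A \<noteq> {} \<and> B \<noteq> {} \<and> A \<union> B = V - {x} \<and> A \<inter> B = {} \<and>
     (\<forall>e\<in>E. e \<subseteq> insert x A \<or> e \<subseteq> insert x B)"

lemma cut_vertex_split_sym: "cut_vertex_split V E x A B \<Longrightarrow> cut_vertex_split V E x B A"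
  unfolding cut_vertex_split_def by blast

lemma cut_vertex_split_edge_side:
  assumes "cut_vertex_split V E x A B" "e \<in> E" "e \<inter> A \<noteq> {}"
  shows "e \<subseteq> insert x A"
  using assms unfolding cut_vertex_split_def by blast

lemma cut_vertex_split_side_even:
  assumes sg: "simple_graph V E" and fc: "factor_critical V E" and sp: "cut_vertex_split V E x A B"
  shows "even (card A)"
proof -
  have x: "x \<in> V" and A: "A \<subseteq> V - {x}" using sp unfolding cut_vertex_split_def by blast+
  obtain M where M: "matching E M" "\<Union>M = V - {x}" using factor_critical_matching[OF fc x] .
  have "\<forall>e\<in>M. e \<inter> A \<noteq> {} \<longrightarrow> e \<subseteq> A"
  proof (intro ballI impI)
    fix e assume "e \<in> M" "e \<inter> A \<noteq> {}"
    moreover from \<open>e \<in> M\<close> have "e \<in> E" "x \<notin> e" using M unfolding matching_def by blast+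
    ultimately show "e \<subseteq> A" using cut_vertex_split_edge_side[OF sp] by blast
  qed
  then have "even (card (A \<inter> \<Union>M))" by (rule even_card_closed_part[OF sg M(1)])
  moreover have "A \<inter> \<Union>M = A" using A M(2) by blast
  ultimately show ?thesis by simp
qed

lemma cut_vertex_split_closed_side:
  assumes sp: "cut_vertex_split V E x A B" and M: "matching E M" and w: "{x, w} \<in> M"
  shows "\<forall>e\<in>M. e \<inter> (A - {w}) \<noteq> {} \<longrightarrow> e \<subseteq> A - {w}"
proof (intro ballI impI)
  fix e assume e: "e \<in> M" "e \<inter> (A - {w}) \<noteq> {}"
  have xA: "x \<notin> A" using sp unfolding cut_vertex_split_def by blast
  have "e \<noteq> {x, w}" using e(2) xA by blast
  then have "x \<notin> e" "w \<notin> e" using matching_edge_unique[OF M e(1) w] by blast+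
  moreover have "e \<subseteq> insert x A"
    using e M cut_vertex_split_edge_side[OF sp] unfolding matching_def by blast
  ultimately show "e \<subseteq> A - {w}" by blast
qed

lemma cut_vertex_split_partner_side:
  assumes sg: "simple_graph V E" and fc: "factor_critical V E" and sp: "cut_vertex_split V E x A B"
    and a: "a \<in> A" and M: "matching E M" "\<Union>M = V - {a}" and z: "{x, z} \<in> M"
  shows "z \<in> A"
proof (rule ccontr)
  assume "z \<notin> A"
  then have "even (card ((A - {z}) \<inter> \<Union>M))"
    using even_card_closed_part[OF sg M(1) cut_vertex_split_closed_side[OF sp M(1) z]] by simp
  moreover have "(A - {z}) \<inter> \<Union>M = A - {a}"
    using \<open>z \<notin> A\<close> M(2) sp unfolding cut_vertex_split_def by blast
  moreover have "A \<subseteq> V" using sp unfolding cut_vertex_split_def by blast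
  then have "finite A" using simple_graph_finite[OF sg] by (rule finite_subset)
  then have "card (A - {a}) + 1 = card A" using a by (metis card_Suc_Diff1 Suc_eq_plus1)
  ultimately show False using cut_vertex_split_side_even[OF sg fc sp] by (metis even_plus_one_iff)
qed

lemma cut_vertex_split_closed_insert_side:
  assumes sp: "cut_vertex_split V E x A B" and M: "matching E M" and z: "{x, z} \<in> M" "z \<in> A"
  shows "\<forall>e\<in>M. e \<inter> insert x A \<noteq> {} \<longrightarrow> e \<subseteq> insert x A"
proof (intro ballI impI)
  fix e assume e: "e \<in> M" "e \<inter> insert x A \<noteq> {}"
  show "e \<subseteq> insert x A"
  proof (cases "x \<in> e")
    case True
    then have "e = {x, z}" using matching_edge_unique[OF M e(1) z(1)] by blast
    then show ?thesis using z(2) by blast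
  next
    case False
    moreover have "e \<in> E" using e(1) M unfolding matching_def by blast
    ultimately show ?thesis using e(2) cut_vertex_split_edge_side[OF sp] by blast
  qed
qed

lemma cut_vertex_split_glue_matchings:
  assumes sp: "cut_vertex_split V E x A B" and a: "a \<in> A" and b: "b \<in> B"
    and Ma: "matching E Ma" "\<Union>Ma = V - {a}" and z: "{x, z} \<in> Ma" "z \<in> A"
    and Mb: "matching E Mb" "\<Union>Mb = V - {b}" and w: "{x, w} \<in> Mb" "w \<in> B"
  obtains N where "matching E N" "\<Union>N = V - {a, b, w}"
proof -
  have sides: "x \<in> V" "A \<union> B = V - {x}" "A \<inter> B = {}"
    using sp unfolding cut_vertex_split_def by blast+
  note closed_A = cut_vertex_split_closed_insert_side[OF sp Ma(1) z]
  note closed_B = cut_vertex_split_closed_side[OF cut_vertex_split_sym[OF sp] Mb(1) w(1)]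
  define N where "N = {e\<in>Ma. e \<subseteq> insert x A} \<union> {e\<in>Mb. e \<subseteq> B - {w}}"
  have "matching E N" unfolding N_def
    using sides by (intro matching_Un matching_subset[OF Ma(1)] matching_subset[OF Mb(1)]) auto
  moreover have "\<Union>N = insert x A \<inter> \<Union>Ma \<union> (B - {w}) \<inter> \<Union>Mb"
    unfolding N_def Union_Un_distrib Union_closed_part[OF closed_A] Union_closed_part[OF closed_B] ..
  then have "\<Union>N = V - {a, b, w}" using sides a b z(2) w(2) unfolding Ma(2) Mb(2) by auto
  ultimately show ?thesis using that by blast
qed

lemma factor_critical_edge_stable_no_cut_vertex_split:
  assumes sg: "simple_graph V E" and fc: "factor_critical V E" and es: "edge_stable V E"
    and sp: "cut_vertex_split V E x A B"
  shows False
proof -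
  have sp': "cut_vertex_split V E x B A" using sp by (rule cut_vertex_split_sym)
  obtain a b where a: "a \<in> A" and b: "b \<in> B" using sp unfolding cut_vertex_split_def by blast
  have x: "x \<in> V" and aV: "a \<in> V" "a \<noteq> x" and bV: "b \<in> V" "b \<noteq> x"
    and sides: "A \<union> B = V - {x}" "A \<inter> B = {}"
    using sp a b unfolding cut_vertex_split_def by blast+
  obtain Ma where Ma: "matching E Ma" "\<Union>Ma = V - {a}" using factor_critical_matching[OF fc aV(1)] .
  obtain Mb where Mb: "matching E Mb" "\<Union>Mb = V - {b}" using factor_critical_matching[OF fc bV(1)] .
  obtain z where z: "{x, z} \<in> Ma" using matching_partner[OF sg Ma(1)] Ma(2) x aV by blast
  obtain w where w: "w \<noteq> x" "{x, w} \<in> Mb" using matching_partner[OF sg Mb(1)] Mb(2) x bV by blast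
  have zA: "z \<in> A" by (rule cut_vertex_split_partner_side[OF sg fc sp a Ma z])
  have wB: "w \<in> B" by (rule cut_vertex_split_partner_side[OF sg fc sp' b Mb w(2)])
  obtain N where N: "matching E N" "\<Union>N = V - {a, b, w}"
    using cut_vertex_split_glue_matchings[OF sp a b Ma z zA Mb w(2) wB] .
  let ?E' = "E - {{b, w}}"
  have "maximal_matching ?E' N"
  proof (rule maximal_matching_if_edges_meet_Union)
    show "matching ?E' N" using N by (intro matching_Diff) auto
  next
    fix e assume e: "e \<in> ?E'"
    then obtain p q where pq: "e = {p, q}" "p \<noteq> q" "p \<in> V" "q \<in> V"
      using simple_graph_edgeE[OF sg] by blast
    have "e \<subseteq> insert x A \<or> e \<subseteq> insert x B" using e sp unfolding cut_vertex_split_def by blast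
    moreover have "x \<notin> {a, b, w}" "a \<notin> B" "b \<notin> A" "w \<notin> A" using aV bV w(1) a b wB sides by blast+
    ultimately show "e \<inter> \<Union>N \<noteq> {}" using e pq unfolding N(2) by auto
  qed
  moreover have "maximal_matching ?E' Mb"
  proof (rule maximal_matching_if_near_perfect[OF simple_graph_Diff[OF sg]])
    show "matching ?E' Mb" using Mb by (intro matching_Diff) auto
    have "card V = card (V - {b}) + 1"
      using simple_graph_finite[OF sg] bV(1) by (metis card_Suc_Diff1 Suc_eq_plus1)
    then show "card V \<le> 2 * card Mb + 1" using card_Union_matching[OF sg Mb(1)] Mb(2) by simp
  qed
  ultimately have "card N = card Mb"
    using edge_stable_equimatchable_Diff[OF es] unfolding equimatchable_def by blast
  moreover have "card (V - {a, b, w}) < card (V - {b})"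
    using simple_graph_finite[OF sg] aV a b sides by (intro psubset_card_mono) blast+
  ultimately show False
    using card_Union_matching[OF sg N(1)] card_Union_matching[OF sg Mb(1)] N(2) Mb(2) by simp
qed

lemma cut_vertex_split_if_not_connected:
  assumes sg: "simple_graph V E" and x: "x \<in> V" and ne: "V - {x} \<noteq> {}"
    and nc: "\<not> connected (V - {x}) (induced_edges E (V - {x}))"
  obtains A B where "cut_vertex_split V E x A B"
proof -
  let ?F = "induced_edges E (V - {x})"
  obtain u v where u: "u \<in> V - {x}" and v: "v \<in> V - {x}" and uv: "\<not> (adj ?F)\<^sup>*\<^sup>* u v"
    using ne nc unfolding connected_def by blast
  define A where "A = {y \<in> V - {x}. (adj ?F)\<^sup>*\<^sup>* u y}"
  have A_closed: "p \<in> A \<longleftrightarrow> q \<in> A" if "{p, q} \<in> ?F" for p q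
  proof -
    have "adj ?F p q" "adj ?F q p" using that unfolding adj_def by (simp_all add: insert_commute)
    moreover have "{p, q} \<subseteq> V - {x}" using that unfolding induced_edges_def by blast
    ultimately show ?thesis unfolding A_def by (auto intro: rtranclp.rtrancl_into_rtrancl)
  qed
  have "cut_vertex_split V E x A (V - {x} - A)"
    unfolding cut_vertex_split_def
  proof (intro conjI ballI x)
    show "A \<noteq> {}" using u unfolding A_def by blast
    show "V - {x} - A \<noteq> {}" using v uv unfolding A_def by blast
    show "A \<union> (V - {x} - A) = V - {x}" "A \<inter> (V - {x} - A) = {}" unfolding A_def by blast+
  next
    fix e assume "e \<in> E"
    then obtain p q where pq: "e = {p, q}" "p \<in> V" "q \<in> V" by (rule simple_graph_edgeE[OF sg])
    show "e \<subseteq> insert x A \<or> e \<subseteq> insert x (V - {x} - A)"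
    proof (cases "x \<in> e")
      case True
      then show ?thesis using pq by blast
    next
      case False
      then have "{p, q} \<in> ?F" using \<open>e \<in> E\<close> pq unfolding induced_edges_def by blast
      then show ?thesis using A_closed pq False by blast
    qed
  qed
  then show ?thesis using that by blast
qed

lemma connected_if_connected_Diff_neighbour:
  assumes conn: "connected (V - {x}) (induced_edges E (V - {x}))"
    and x: "x \<in> V" and z: "z \<in> V" "z \<noteq> x" "{x, z} \<in> E"
  shows "connected V E"
proof -
  have "adj (induced_edges E (V - {x})) \<le> adj E" unfolding adj_def induced_edges_def by auto
  then have path: "(adj E)\<^sup>*\<^sup>* p q" if "p \<in> V - {x}" "q \<in> V - {x}" for p q
    using conn that rtranclp_mono unfolding connected_def by blast
  have "adj E x z" "adj E z x" using z(3) unfolding adj_def by (simp_all add: insert_commute)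
  then have to_z: "(adj E)\<^sup>*\<^sup>* p z" and from_z: "(adj E)\<^sup>*\<^sup>* z p" if "p \<in> V" for p
    using path[of p z] path[of z p] that z(1,2) by (cases "p = x"; auto)+
  show ?thesis
    unfolding connected_def using x by (blast intro: rtranclp_trans[OF to_z from_z])
qed

theorem corollary3p9:
  fixes V :: "'a set" and E :: "'a set set"
  assumes "simple_graph V E"
    and "card V \<ge> 2"
    and "factor_critical V E"
    and "equimatchable V E"
    and "edge_stable V E"
  shows "two_connected V E"
proof -
  \<comment> \<open>Equimatchability of the graph itself is already part of edge_stable.\<close>
  note sg = assms(1) and fc = assms(3) and es = assms(5)
  obtain x0 where x0: "x0 \<in> V" using assms(2) by fastforce
  then have "card (V - {x0}) \<ge> 1" using assms(2) by (simp add: card_Diff_singleton)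
  then obtain a where a: "a \<in> V" "a \<noteq> x0" by (metis DiffE card.empty ex_in_conv insertCI not_one_le_zero)
  have "odd (card V)" by (rule factor_critical_card_odd[OF sg fc x0])
  then have card_V: "card V \<ge> 3" using assms(2) by presburger
  have conn: "connected (V - {x}) (induced_edges E (V - {x}))" if x: "x \<in> V" for x
  proof (rule ccontr)
    have "V - {x} \<noteq> {}" using x0 a by blast
    moreover assume "\<not> connected (V - {x}) (induced_edges E (V - {x}))"
    ultimately obtain A B where "cut_vertex_split V E x A B"
      using cut_vertex_split_if_not_connected[OF sg x] by blast
    then show False by (rule factor_critical_edge_stable_no_cut_vertex_split[OF sg fc es])
  qed
  obtain z where "z \<in> V" "z \<noteq> x0" "{x0, z} \<in> E"
    using factor_critical_neighbour[OF sg fc x0 a] .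
  then have "connected V E" by (rule connected_if_connected_Diff_neighbour[OF conn[OF x0] x0])
  then show ?thesis unfolding two_connected_def using card_V conn by blast
qed

end
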